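(* For any distributions $p_H,p_\Gamma$ of the gains (with $H,\Gamma\ge0$ independent) and any rates $R_s\ge0$, $R_c>0$, one has $ED_s(R_s,R_c)\ge ED_j(R_s+R_c)$. Consequently $ED_s^*:=\inf_{R_s\ge0,R_c>0}ED_s(R_s,R_c)\ \ge\ ED_j^*:=\inf_{R_j>0}ED_j(R_j)$.
   Context: $H\ge0$, $\Gamma\ge0$ are the channel and side-information gains. Logarithms base 2. Define $D_d(R,\gamma)=(\gamma+2^{2R})^{-1}$. Separate source-channel coding (SSCC): for $R_s\ge0,R_c>0$, outage set $\mathcal O_s=\{(h,\gamma): R_c\ge\tfrac12\log_2(1+h)\}\cup\{(h,\gamma): R_c\le \tfrac12\log_2(1+\tfrac{2^{2(R_s+R_c)}-1}{1+\gamma})\}$ and $ED_s(R_s,R_c)=\mathrm E[D_d(R_s+R_c,\Gamma)\mathbf 1\{(H,\Gamma)\notin\mathcal O_s\}]+\mathrm E[D_d(0,\Gamma)\mathbf 1\{(H,\Gamma)\in\mathcal O_s\}]$. Joint decoding scheme (JDS): for $R_j>0$, outage set $\mathcal O_j=\{(h,\gamma):\tfrac12\log_2(1+\tfrac{2^{2R_j}-1}{\gamma+1})\ge\tfrac12\log_2(1+h)\}$ and $ED_j(R_j)=\mathrm E[D_d(R_j,\Gamma)\mathbf 1\{(H,\Gamma)\notin\mathcal O_j\}]+\mathrm E[D_d(0,\Gamma)\mathbf 1\{(H,\Gamma)\in\mathcal O_j\}]$. *)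

theory Defs
  imports "HOL-Probability.Probability"
begin

definition D_d :: "real \<Rightarrow> real \<Rightarrow> real" where
  "D_d R \<gamma> = inverse (\<gamma> + 2 powr (2 * R))"

definition outage_s :: "real \<Rightarrow> real \<Rightarrow> (real \<times> real) set" where
  "outage_s Rs Rc =
     {(h, \<gamma>). Rc \<ge> 1/2 * log 2 (1 + h)} \<union>
     {(h, \<gamma>). Rc \<le> 1/2 * log 2 (1 + (2 powr (2 * (Rs + Rc)) - 1) / (1 + \<gamma>))}"

definition outage_j :: "real \<Rightarrow> (real \<times> real) set" where
  "outage_j Rj =
     {(h, \<gamma>). 1/2 * log 2 (1 + (2 powr (2 * Rj) - 1) / (\<gamma> + 1)) \<ge> 1/2 * log 2 (1 + h)}"

definition ED_s :: "(real \<times> real) measure \<Rightarrow> real \<Rightarrow> real \<Rightarrow> real" where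
  "ED_s M Rs Rc =
     (\<integral>x. D_d (Rs + Rc) (snd x) * indicator (- outage_s Rs Rc) x \<partial>M)
   + (\<integral>x. D_d 0 (snd x) * indicator (outage_s Rs Rc) x \<partial>M)"

definition ED_j :: "(real \<times> real) measure \<Rightarrow> real \<Rightarrow> real" where
  "ED_j M Rj =
     (\<integral>x. D_d Rj (snd x) * indicator (- outage_j Rj) x \<partial>M)
   + (\<integral>x. D_d 0 (snd x) * indicator (outage_j Rj) x \<partial>M)"

end

theory Submission
  imports Defs
begin

text \<open>Joint decoding at rate Rs + Rc is in outage only if separate coding is: when
  log(1 + h)/2 \<le> log(1 + (2^(2(Rs + Rc)) - 1)/(1 + \<gamma>))/2, either Rc is at least the left-hand
  side or at most the right-hand side. Outside their outage sets both schemes achieve the same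
  distortion D_d (Rs + Rc) \<gamma>, and in outage both fall back to the larger D_d 0 \<gamma>. So the
  distortion of separate coding dominates that of joint decoding pointwise; integrating gives the
  first claim, and choosing Rj = Rs + Rc compares the infima.\<close>

lemma D_d_nonneg: "\<gamma> \<ge> 0 \<Longrightarrow> 0 \<le> D_d R \<gamma>"
  unfolding D_d_def by simp

lemma D_d_le_one: "R \<ge> 0 \<Longrightarrow> \<gamma> \<ge> 0 \<Longrightarrow> D_d R \<gamma> \<le> 1"
  unfolding D_d_def by (auto simp: inverse_le_1_iff ge_one_powr_ge_zero add_increasing)

lemma D_d_antimono: "R \<le> R' \<Longrightarrow> \<gamma> \<ge> 0 \<Longrightarrow> D_d R' \<gamma> \<le> D_d R \<gamma>"
  unfolding D_d_def by (intro le_imp_inverse_le) (auto simp: add_nonneg_pos)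

definition outage_distortion :: "(real \<times> real) set \<Rightarrow> real \<Rightarrow> real \<times> real \<Rightarrow> real" where
  "outage_distortion E R x = (if x \<in> E then D_d 0 (snd x) else D_d R (snd x))"

lemma outage_distortion_nonneg: "snd x \<ge> 0 \<Longrightarrow> 0 \<le> outage_distortion E R x"
  unfolding outage_distortion_def by (simp add: D_d_nonneg)

lemma outage_distortion_mono:
  "E \<subseteq> E' \<Longrightarrow> R \<ge> 0 \<Longrightarrow> snd x \<ge> 0 \<Longrightarrow> outage_distortion E R x \<le> outage_distortion E' R x"
  unfolding outage_distortion_def by (auto simp: D_d_antimono)

lemma measurable_D_d_snd [measurable]:
  "(\<lambda>x::real \<times> real. D_d R (snd x)) \<in> borel_measurable (borel \<Otimes>\<^sub>M borel)"
  unfolding D_d_def by measurable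

lemma borel_measurable_half_log_one_plus_fst:
  "(\<lambda>x::real \<times> real. 1/2 * log 2 (1 + fst x)) \<in> borel_measurable (borel \<Otimes>\<^sub>M borel)"
  by measurable

lemma borel_measurable_half_log_one_plus_div_snd:
  "(\<lambda>x::real \<times> real. 1/2 * log 2 (1 + c / (1 + snd x))) \<in> borel_measurable (borel \<Otimes>\<^sub>M borel)"
  by measurable

lemma outage_s_in_sets: "outage_s Rs Rc \<in> sets (borel \<Otimes>\<^sub>M borel :: (real \<times> real) measure)"
proof -
  have "outage_s Rs Rc = {x \<in> space (borel \<Otimes>\<^sub>M borel). 1/2 * log 2 (1 + fst x) \<le> Rc} \<union>
      {x \<in> space (borel \<Otimes>\<^sub>M borel).
         Rc \<le> 1/2 * log 2 (1 + (2 powr (2 * (Rs + Rc)) - 1) / (1 + snd x))}"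
    by (auto simp: outage_s_def space_pair_measure)
  also have "\<dots> \<in> sets (borel \<Otimes>\<^sub>M borel)"
    by (intro sets.Un borel_measurable_le borel_measurable_const
        borel_measurable_half_log_one_plus_fst borel_measurable_half_log_one_plus_div_snd)
  finally show ?thesis .
qed

lemma outage_j_in_sets: "outage_j Rj \<in> sets (borel \<Otimes>\<^sub>M borel :: (real \<times> real) measure)"
proof -
  have "outage_j Rj = {x \<in> space (borel \<Otimes>\<^sub>M borel).
      1/2 * log 2 (1 + fst x) \<le> 1/2 * log 2 (1 + (2 powr (2 * Rj) - 1) / (1 + snd x))}"
    by (auto simp: outage_j_def space_pair_measure add.commute)
  also have "\<dots> \<in> sets (borel \<Otimes>\<^sub>M borel)"
    by (intro borel_measurable_le
        borel_measurable_half_log_one_plus_fst borel_measurable_half_log_one_plus_div_snd)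
  finally show ?thesis .
qed

lemma outage_j_subset_outage_s: "outage_j (Rs + Rc) \<subseteq> outage_s Rs Rc"
  by (auto simp: outage_j_def outage_s_def add.commute)

lemma (in pair_sigma_finite) AE_pair_measure_snd:
  assumes "Measurable.pred M2 P" and "AE y in M2. P y"
  shows "AE x in M1 \<Otimes>\<^sub>M M2. P (snd x)"
proof (rule AE_pair_measure)
  show "{x \<in> space (M1 \<Otimes>\<^sub>M M2). P (snd x)} \<in> sets (M1 \<Otimes>\<^sub>M M2)"
    using assms(1) by measurable
  show "AE x in M1. AE y in M2. P (snd (x, y))"
    using assms(2) by simp
qed

context
  fixes M :: "(real \<times> real) measure"
  assumes finite_M: "finite_measure M"
    and sets_M: "sets M = sets (borel \<Otimes>\<^sub>M borel)"
    and AE_snd_nonneg: "AE x in M. snd x \<ge> 0"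
begin

lemma integrable_D_d_indicator:
  assumes "R \<ge> 0" and "A \<in> sets (borel \<Otimes>\<^sub>M borel)"
  shows "integrable M (\<lambda>x. D_d R (snd x) * indicator A x)"
proof (rule finite_measure.integrable_const_bound[OF finite_M, where B = 1])
  show "AE x in M. norm (D_d R (snd x) * indicator A x) \<le> 1"
    using AE_snd_nonneg
    by eventually_elim (auto simp: indicator_def D_d_nonneg D_d_le_one assms(1))
  have "(\<lambda>x. D_d R (snd x) * indicator A x) \<in> borel_measurable (borel \<Otimes>\<^sub>M borel)"
    using assms(2) by measurable
  then show "(\<lambda>x. D_d R (snd x) * indicator A x) \<in> borel_measurable M"
    by (simp add: measurable_cong_sets[OF sets_M refl])
qed

lemma integral_outage_distortion:
  assumes "R \<ge> 0" and "E \<in> sets (borel \<Otimes>\<^sub>M borel)"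
  shows "(\<integral>x. D_d R (snd x) * indicator (- E) x \<partial>M) + (\<integral>x. D_d 0 (snd x) * indicator E x \<partial>M)
       = (\<integral>x. outage_distortion E R x \<partial>M)"
    and "integrable M (outage_distortion E R)"
proof -
  have "- E = space (borel \<Otimes>\<^sub>M borel) - E"
    by (auto simp: space_pair_measure)
  then have "- E \<in> sets (borel \<Otimes>\<^sub>M borel)"
    using assms(2) by auto
  then have ints: "integrable M (\<lambda>x. D_d R (snd x) * indicator (- E) x)"
      "integrable M (\<lambda>x. D_d 0 (snd x) * indicator E x)"
    using assms by (auto intro: integrable_D_d_indicator)
  have split: "outage_distortion E R =
      (\<lambda>x. D_d R (snd x) * indicator (- E) x + D_d 0 (snd x) * indicator E x)"
    by (auto simp: outage_distortion_def indicator_def)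
  show "integrable M (outage_distortion E R)"
    unfolding split using ints by (rule Bochner_Integration.integrable_add)
  show "(\<integral>x. D_d R (snd x) * indicator (- E) x \<partial>M) + (\<integral>x. D_d 0 (snd x) * indicator E x \<partial>M)
       = (\<integral>x. outage_distortion E R x \<partial>M)"
    unfolding split by (rule Bochner_Integration.integral_add[OF ints, symmetric])
qed

lemma ED_j_eq: "Rj \<ge> 0 \<Longrightarrow> ED_j M Rj = (\<integral>x. outage_distortion (outage_j Rj) Rj x \<partial>M)"
  unfolding ED_j_def by (rule integral_outage_distortion(1)[OF _ outage_j_in_sets])

lemma ED_s_eq:
  "Rs + Rc \<ge> 0 \<Longrightarrow> ED_s M Rs Rc = (\<integral>x. outage_distortion (outage_s Rs Rc) (Rs + Rc) x \<partial>M)"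
  unfolding ED_s_def by (rule integral_outage_distortion(1)[OF _ outage_s_in_sets])

lemma ED_j_nonneg:
  assumes "Rj \<ge> 0"
  shows "0 \<le> ED_j M Rj"
  unfolding ED_j_eq[OF assms]
proof (rule integral_nonneg_AE)
  show "AE x in M. 0 \<le> outage_distortion (outage_j Rj) Rj x"
    using AE_snd_nonneg by (rule eventually_mono) (rule outage_distortion_nonneg)
qed

lemma ED_j_le_ED_s:
  assumes "Rs + Rc \<ge> 0"
  shows "ED_j M (Rs + Rc) \<le> ED_s M Rs Rc"
  unfolding ED_j_eq[OF assms] ED_s_eq[OF assms]
proof (rule integral_mono_AE)
  show "integrable M (outage_distortion (outage_j (Rs + Rc)) (Rs + Rc))"
      "integrable M (outage_distortion (outage_s Rs Rc) (Rs + Rc))"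
    by (rule integral_outage_distortion(2)[OF assms outage_j_in_sets],
        rule integral_outage_distortion(2)[OF assms outage_s_in_sets])
  show "AE x in M. outage_distortion (outage_j (Rs + Rc)) (Rs + Rc) x
      \<le> outage_distortion (outage_s Rs Rc) (Rs + Rc) x"
    using AE_snd_nonneg
    by (rule eventually_mono) (rule outage_distortion_mono[OF outage_j_subset_outage_s assms])
qed

end

theorem lemma3:
  fixes pH pG :: "real measure"
  assumes "prob_space pH" and "prob_space pG"
    and "sets pH = sets borel" and "sets pG = sets borel"
    and "AE h in pH. h \<ge> 0" and "AE g in pG. g \<ge> 0"
  shows "(\<forall>Rs Rc. Rs \<ge> 0 \<longrightarrow> Rc > 0 \<longrightarrow>
            ED_s (pH \<Otimes>\<^sub>M pG) Rs Rc \<ge> ED_j (pH \<Otimes>\<^sub>M pG) (Rs + Rc))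
       \<and> (INF p \<in> {p :: real \<times> real. fst p \<ge> 0 \<and> snd p > 0}. ED_s (pH \<Otimes>\<^sub>M pG) (fst p) (snd p))
           \<ge> (INF Rj \<in> {0<..}. ED_j (pH \<Otimes>\<^sub>M pG) Rj)"
proof -
  interpret H: prob_space pH by fact
  interpret G: prob_space pG by fact
  interpret P: pair_prob_space pH pG ..
  have sets_pair: "sets (pH \<Otimes>\<^sub>M pG) = sets (borel \<Otimes>\<^sub>M borel)"
    by (rule sets_pair_measure_cong) (use assms in auto)
  have "AE x in pH \<Otimes>\<^sub>M pG. 0 \<le> snd x"
    using assms(6)
    by (intro P.AE_pair_measure_snd) (simp_all add: measurable_cong_sets[OF assms(4) refl])
  note ED_j_le_ED_s = ED_j_le_ED_s[OF P.finite_measure_axioms sets_pair this]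
    and ED_j_nonneg = ED_j_nonneg[OF P.finite_measure_axioms sets_pair this]
  have "bdd_below (ED_j (pH \<Otimes>\<^sub>M pG) ` {0<..})"
    by (rule bdd_belowI[of _ 0]) (auto intro: ED_j_nonneg)
  then show ?thesis
    by (intro conjI allI impI ED_j_le_ED_s cINF_mono)
      (auto intro!: bexI[where x = "fst p + snd p" for p] ED_j_le_ED_s gt_ex)
qed

end
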